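(* Let $p$ be a prime, $q=p^e$, and let $T:\mathbb{F}_q\to U$ be the Teichmüller lift. Let $M_0=(T(a)^r)_{r\in[0,q-1],\,a\in\mathbb{F}_q}$ be the $q\times q$ matrix over $\mathbb{Z}_p[\xi_{q-1}]$ whose rows are indexed by $r\in\{0,1,\dots,q-1\}$ and columns by $a\in\mathbb{F}_q$ (with the convention $T(0)^0=1$, so the row $r=0$ consists of all ones), and let $\boldsymbol{M}=M_0^{\otimes k}$ be its $k$-th Kronecker (tensor) power, a $q^k\times q^k$ matrix. Then for every vector $x\in\mathbb{Q}_p(\xi_{p(q-1)})^{q^k}$, setting $y=\boldsymbol{M}x$, we have $\nu_p(y)=\nu_p(x)$.
   Context: $\xi_m$ denotes a primitive $m$-th root of unity in $\mathbb{C}_p$ (the completion of an algebraic closure of $\mathbb{Q}_p$). The ring $\mathbb{Z}_p[\xi_{q-1}]$ has maximal ideal $(p)$ and residue field identified with $\mathbb{F}_q$; $U$ is the set of roots of $X^q-X$ in $\mathbb{Z}_p[\xi_{q-1}]$ (the $(q-1)$-st roots of unity together with $0$), and the Teichmüller lift $T:\mathbb{F}_q\to U$ is the inverse of the reduction bijection $U\to\mathbb{F}_q$ (so $T(0)=0$). $\nu_p$ is the $p$-adic valuation on $\mathbb{Q}_p$ extended to $\mathbb{Q}_p(\xi_{p(q-1)})$ (values in $\frac{1}{p-1}\mathbb{Z}\cup\{\infty\}$, $\nu_p(0)=\infty$). For a vector $x=(x_1,\dots,x_n)$, $\nu_p(x)=\min_i\nu_p(x_i)$. *)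

theory Defs
  imports Complex_Main "HOL-Library.Extended_Real" "HOL-Library.Cardinality" "HOL-Computational_Algebra.Primes"
begin

definition is_valuation :: "nat \<Rightarrow> ('K::field \<Rightarrow> ereal) \<Rightarrow> bool" where
  "is_valuation p \<nu> \<longleftrightarrow>
     (\<forall>x. (\<nu> x = \<infinity>) \<longleftrightarrow> x = 0) \<and> (\<forall>x. \<nu> x \<noteq> -\<infinity>) \<and>
     (\<forall>x y. \<nu> (x * y) = \<nu> x + \<nu> y) \<and>
     (\<forall>x y. \<nu> (x + y) \<ge> min (\<nu> x) (\<nu> y)) \<and>
     \<nu> (of_nat p) = 1"

definition is_reduction :: "('K::field \<Rightarrow> ereal) \<Rightarrow> ('K \<Rightarrow> 'F::field) \<Rightarrow> bool" where
  "is_reduction \<nu> red \<longleftrightarrow>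
     (\<forall>x y. \<nu> x \<ge> 0 \<longrightarrow> \<nu> y \<ge> 0 \<longrightarrow> red (x + y) = red x + red y) \<and>
     (\<forall>x y. \<nu> x \<ge> 0 \<longrightarrow> \<nu> y \<ge> 0 \<longrightarrow> red (x * y) = red x * red y) \<and>
     red 1 = 1 \<and>
     (\<forall>x. \<nu> x \<ge> 0 \<longrightarrow> (red x = 0 \<longleftrightarrow> \<nu> x > 0)) \<and>
     red ` {x. \<nu> x \<ge> 0} = UNIV"

definition teich_set :: "('K::field \<Rightarrow> ereal) \<Rightarrow> nat \<Rightarrow> 'K set" where
  "teich_set \<nu> q = {u. \<nu> u \<ge> 0 \<and> u ^ q = u}"

text \<open>Teichmueller lift: T maps into U and is a section of the reduction map
  (hence the inverse of the bijection U -> F).\<close>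
definition is_teichmueller :: "('K::field \<Rightarrow> ereal) \<Rightarrow> nat \<Rightarrow> ('K \<Rightarrow> 'F::field) \<Rightarrow> ('F \<Rightarrow> 'K) \<Rightarrow> bool" where
  "is_teichmueller \<nu> q red T \<longleftrightarrow> (\<forall>a. T a \<in> teich_set \<nu> q \<and> red (T a) = a)"

text \<open>The q x q matrix M_0 = (T(a)^r), rows r in [0,q-1], columns a in F (0^0 = 1).\<close>
definition M0 :: "('F \<Rightarrow> 'K::field) \<Rightarrow> nat \<Rightarrow> 'F \<Rightarrow> 'K" where
  "M0 T r a = T a ^ r"

text \<open>k-th Kronecker power of a matrix whose rows/columns are indexed by 'r/'c;
  rows/columns of the power are indexed by length-k tuples (lists).\<close>
fun kron_pow :: "('r \<Rightarrow> 'c \<Rightarrow> 'a::comm_ring_1) \<Rightarrow> 'r list \<Rightarrow> 'c list \<Rightarrow> 'a" where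
  "kron_pow M [] [] = 1"
| "kron_pow M (r # rs) (c # cs) = M r c * kron_pow M rs cs"
| "kron_pow M _ _ = 0"

definition row_idx :: "nat \<Rightarrow> nat \<Rightarrow> nat list set" where
  "row_idx q k = {rs. length rs = k \<and> set rs \<subseteq> {0..<q}}"

definition col_idx :: "nat \<Rightarrow> 'F list set" where
  "col_idx k = {as. length as = k}"

definition kron_apply :: "('r \<Rightarrow> 'c \<Rightarrow> 'a::comm_ring_1) \<Rightarrow> nat \<Rightarrow> ('c list \<Rightarrow> 'a) \<Rightarrow> 'r list \<Rightarrow> 'a" where
  "kron_apply M k x rs = (\<Sum>as\<in>{as. length as = k}. kron_pow M rs as * x as)"

definition vec_val :: "('K \<Rightarrow> ereal) \<Rightarrow> 'i set \<Rightarrow> ('i \<Rightarrow> 'K) \<Rightarrow> ereal" where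
  "vec_val \<nu> I x = (INF i\<in>I. \<nu> (x i))"

end

theory Submission
  imports Defs
begin

text \<open>
  The entries of \<open>M\<close> are integral, so \<open>\<nu>(M x) \<ge> \<nu>(x)\<close>. Conversely, divide \<open>x\<close> by an
  entry \<open>c\<close> of minimal valuation: \<open>x / c\<close> is integral with non-zero reduction \<open>z\<close>. The
  reduction of \<open>M\<close> is the Kronecker power of the matrix \<open>(a\<^sup>r)\<close> over \<open>\<bbbF>\<^sub>q\<close>, which is
  injective because \<open>1 - (a - b)\<^sup>q\<^sup>-\<^sup>1\<close> is the indicator function of \<open>b\<close> and a
  polynomial of degree \<open>< q\<close> in \<open>a\<close>. Hence some entry of \<open>M (x / c)\<close> is a unit,
  i.e. some entry of \<open>M x\<close> has valuation \<open>\<nu>(c)\<close>.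
\<close>

lemma finite_field_power_card_minus_one:
  fixes a :: "'F::{finite,field}"
  assumes "a \<noteq> 0"
  shows "a ^ (CARD('F) - 1) = 1"
proof -
  let ?S = "UNIV - {0::'F}"
  have "bij_betw (\<lambda>y. a * y) ?S ?S"
    unfolding bij_betw_def inj_on_def using assms
    by (auto simp: image_def intro!: bexI[of _ "_ / a"])
  then have "\<Prod>?S = (\<Prod>y\<in>?S. a * y)"
    using prod.reindex_bij_betw[of "\<lambda>y. a * y" ?S ?S id] by simp
  also have "\<dots> = a ^ card ?S * \<Prod>?S"
    by (simp add: prod.distrib)
  finally have "a ^ card ?S = 1"
    using prod_zero_iff[of ?S id] by (simp add: field_simps)
  moreover have "card ?S = CARD('F) - 1"
    by (simp add: card_Diff_subset)
  ultimately show ?thesis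
    by simp
qed

lemma card_field_ge_2: "CARD('F::{finite,field}) \<ge> 2"
proof -
  have "card {0::'F, 1} \<le> CARD('F)"
    by (intro card_mono) simp_all
  then show ?thesis
    by simp
qed

definition kernel_trivial :: "'r set \<Rightarrow> 'c set \<Rightarrow> ('r \<Rightarrow> 'c \<Rightarrow> 'a::comm_ring_1) \<Rightarrow> bool" where
  "kernel_trivial R C A \<longleftrightarrow> (\<forall>z. (\<forall>r\<in>R. (\<Sum>c\<in>C. A r c * z c) = 0) \<longrightarrow> (\<forall>c\<in>C. z c = 0))"

lemma kernel_trivial_power_matrix:
  "kernel_trivial {0..<CARD('F)} UNIV (\<lambda>r (a::'F::{finite,field}). a ^ r)"
  unfolding kernel_trivial_def
proof (intro allI impI ballI)
  fix w :: "'F \<Rightarrow> 'F" and b :: 'F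
  assume moments: "\<forall>r\<in>{0..<CARD('F)}. (\<Sum>a\<in>UNIV. a ^ r * w a) = 0"
  define n where "n = CARD('F) - 1"
  have "n \<ge> 1" and "n < CARD('F)"
    using card_field_ge_2[where 'F = 'F] unfolding n_def by auto
  have indicator: "1 - (a - b) ^ n = (if a = b then 1 else 0)" for a
    using finite_field_power_card_minus_one[of "a - b"] \<open>n \<ge> 1\<close> unfolding n_def by auto
  have binomial: "(a - b) ^ n = (\<Sum>j\<le>n. of_nat (n choose j) * (-b) ^ (n - j) * a ^ j)" for a :: 'F
    using binomial_ring[of a "-b" n] by (simp add: mult_ac)
  have "w b = (\<Sum>a\<in>UNIV. (1 - (a - b) ^ n) * w a)"
    by (simp add: indicator if_distrib[of "\<lambda>c. c * _"] cong: if_cong)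
  also have "\<dots> = (\<Sum>a\<in>UNIV. a ^ 0 * w a)
      - (\<Sum>a\<in>UNIV. \<Sum>j\<le>n. of_nat (n choose j) * (-b) ^ (n - j) * (a ^ j * w a))"
    by (simp add: binomial left_diff_distrib right_diff_distrib sum_subtractf sum_distrib_left
        sum_distrib_right mult_ac)
  also have "\<dots> = (\<Sum>a\<in>UNIV. a ^ 0 * w a)
      - (\<Sum>j\<le>n. of_nat (n choose j) * (-b) ^ (n - j) * (\<Sum>a\<in>UNIV. a ^ j * w a))"
    by (simp add: sum.swap[of _ UNIV] sum_distrib_left)
  also have "\<dots> = 0"
    using moments \<open>n < CARD('F)\<close> bspec[OF moments, of 0] card_field_ge_2[where 'F = 'F] by simp
  finally show "w b = 0" .
qed

lemma sum_lists_length_Suc: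
  "(\<Sum>cs\<in>{cs::'c::finite list. length cs = Suc k}. f cs)
     = (\<Sum>c\<in>UNIV. \<Sum>cs\<in>{cs. length cs = k}. f (c # cs))"
proof -
  have lists: "{cs::'c list. length cs = Suc k} = (\<lambda>(c, cs). c # cs) ` (UNIV \<times> {cs. length cs = k})"
    by (auto simp: length_Suc_conv image_def)
  have "inj_on (\<lambda>(c, cs). c # cs) (UNIV \<times> {cs::'c list. length cs = k})"
    by (auto simp: inj_on_def)
  then show ?thesis
    unfolding lists by (simp add: sum.reindex sum.cartesian_product split_def)
qed

lemma kernel_trivial_kron_pow:
  fixes N :: "'r \<Rightarrow> 'c::finite \<Rightarrow> 'a::comm_ring_1"
  assumes "kernel_trivial R UNIV N"
  shows "kernel_trivial {rs. length rs = k \<and> set rs \<subseteq> R} {cs. length cs = k} (kron_pow N)"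
proof (induction k)
  case 0
  then show ?case
    by (auto simp: kernel_trivial_def)
next
  case (Suc k)
  show ?case
    unfolding kernel_trivial_def
  proof (intro allI impI ballI)
    fix z :: "'c list \<Rightarrow> 'a" and cs :: "'c list"
    assume z: "\<forall>rs\<in>{rs. length rs = Suc k \<and> set rs \<subseteq> R}.
                 (\<Sum>cs\<in>{cs. length cs = Suc k}. kron_pow N rs cs * z cs) = 0"
      and "cs \<in> {cs. length cs = Suc k}"
    then obtain c cs' where cs: "cs = c # cs'" "length cs' = k"
      by (auto simp: length_Suc_conv)
    define w where "w rs c = (\<Sum>cs\<in>{cs. length cs = k}. kron_pow N rs cs * z (c # cs))" for rs c
    have w_eq_0: "w rs c = 0" if "length rs = k" "set rs \<subseteq> R" for rs c
    proof -
      have "(\<Sum>c\<in>UNIV. N r c * w rs c) = 0" if "r \<in> R" for r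
      proof -
        have "(\<Sum>c\<in>UNIV. N r c * w rs c)
            = (\<Sum>cs\<in>{cs. length cs = Suc k}. kron_pow N (r # rs) cs * z cs)"
          by (simp add: sum_lists_length_Suc w_def sum_distrib_left mult.assoc)
        also have "\<dots> = 0"
          using z \<open>length rs = k\<close> \<open>set rs \<subseteq> R\<close> \<open>r \<in> R\<close> by simp
        finally show ?thesis .
      qed
      then show ?thesis
        using assms by (simp add: kernel_trivial_def)
    qed
    have "z (c # cs') = 0"
      by (rule Suc.IH[unfolded kernel_trivial_def, rule_format, of "\<lambda>cs. z (c # cs)"])
        (use w_eq_0 cs(2) in \<open>auto simp: w_def\<close>)
    then show "z cs = 0"
      using cs(1) by simp
  qed
qed

context
  fixes p :: nat and \<nu> :: "'K::field \<Rightarrow> ereal"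
  assumes valuation: "is_valuation p \<nu>"
begin

lemma val_eq_infinity_iff: "\<nu> x = \<infinity> \<longleftrightarrow> x = 0"
  using valuation by (simp add: is_valuation_def)

lemma val_neq_minus_infinity: "\<nu> x \<noteq> -\<infinity>"
  using valuation by (simp add: is_valuation_def)

lemma val_mult: "\<nu> (x * y) = \<nu> x + \<nu> y"
  using valuation by (simp add: is_valuation_def)

lemma val_add_ge_min: "\<nu> (x + y) \<ge> min (\<nu> x) (\<nu> y)"
  using valuation by (simp add: is_valuation_def)

lemma val_zero: "\<nu> 0 = \<infinity>"
  by (simp add: val_eq_infinity_iff)

lemma val_one: "\<nu> 1 = 0"
  using val_mult[of 1 1] val_eq_infinity_iff[of 1] val_neq_minus_infinity[of 1]
  by (cases "\<nu> 1") auto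

lemma val_power_nonneg: "\<nu> x \<ge> 0 \<Longrightarrow> \<nu> (x ^ n) \<ge> 0"
  by (induction n) (simp_all add: val_one val_mult)

lemma val_divide_nonneg:
  assumes "y \<noteq> 0" and "\<nu> y \<le> \<nu> x"
  shows "\<nu> (x / y) \<ge> 0"
proof -
  have "\<nu> (x / y) + \<nu> y = \<nu> x"
    using assms(1) by (simp flip: val_mult)
  then have "0 + \<nu> y \<le> \<nu> (x / y) + \<nu> y"
    using assms(2) by simp
  moreover have "\<nu> y \<noteq> \<infinity>" "\<nu> y \<noteq> -\<infinity>"
    using assms(1) by (simp_all add: val_eq_infinity_iff val_neq_minus_infinity)
  ultimately show ?thesis
    using ereal_add_le_add_iff2[of 0 "\<nu> y" "\<nu> (x / y)"] by simp
qed

lemma val_sum_ge: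
  "finite A \<Longrightarrow> (\<And>i. i \<in> A \<Longrightarrow> \<nu> (f i) \<ge> m) \<Longrightarrow> \<nu> (sum f A) \<ge> m"
proof (induction A rule: finite_induct)
  case empty
  then show ?case
    by (simp add: val_zero)
next
  case (insert a A)
  then have "m \<le> min (\<nu> (f a)) (\<nu> (sum f A))"
    by simp
  with insert show ?case
    using order_trans[OF _ val_add_ge_min[of "f a" "sum f A"]] by simp
qed

lemma val_kron_pow_nonneg:
  assumes "\<And>r c. \<nu> (M r c) \<ge> 0"
  shows "\<nu> (kron_pow M rs cs) \<ge> 0"
proof (induction rs arbitrary: cs)
  case Nil
  then show ?case
    by (cases cs) (simp_all add: val_one val_zero)
next
  case (Cons r rs)
  then show ?case
    by (cases cs) (simp_all add: val_zero val_mult assms)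
qed

lemma vec_val_mat_apply_ge:
  assumes "finite C" and "\<And>r c. r \<in> R \<Longrightarrow> c \<in> C \<Longrightarrow> \<nu> (A r c) \<ge> 0"
  shows "vec_val \<nu> C x \<le> vec_val \<nu> R (\<lambda>r. \<Sum>c\<in>C. A r c * x c)"
  unfolding vec_val_def
proof (intro INF_greatest val_sum_ge[OF \<open>finite C\<close>])
  fix r c
  assume "r \<in> R" "c \<in> C"
  then have "(INF c\<in>C. \<nu> (x c)) \<le> \<nu> (x c)"
    by (intro INF_lower)
  also have "\<dots> \<le> \<nu> (A r c * x c)"
    using assms(2)[OF \<open>r \<in> R\<close> \<open>c \<in> C\<close>] by (simp add: val_mult add_increasing)
  finally show "(INF c\<in>C. \<nu> (x c)) \<le> \<nu> (A r c * x c)" .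
qed

context
  fixes red :: "'K \<Rightarrow> 'F::field"
  assumes reduction: "is_reduction \<nu> red"
begin

lemma red_add: "\<nu> x \<ge> 0 \<Longrightarrow> \<nu> y \<ge> 0 \<Longrightarrow> red (x + y) = red x + red y"
  using reduction by (simp add: is_reduction_def)

lemma red_mult: "\<nu> x \<ge> 0 \<Longrightarrow> \<nu> y \<ge> 0 \<Longrightarrow> red (x * y) = red x * red y"
  using reduction by (simp add: is_reduction_def)

lemma red_one: "red 1 = 1"
  using reduction by (simp add: is_reduction_def)

lemma red_eq_0_iff: "\<nu> x \<ge> 0 \<Longrightarrow> red x = 0 \<longleftrightarrow> \<nu> x > 0"
  using reduction by (simp add: is_reduction_def)

lemma red_zero: "red 0 = 0"
  by (simp add: red_eq_0_iff val_zero)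

lemma red_sum:
  "finite A \<Longrightarrow> (\<And>i. i \<in> A \<Longrightarrow> \<nu> (f i) \<ge> 0) \<Longrightarrow> red (sum f A) = (\<Sum>i\<in>A. red (f i))"
proof (induction A rule: finite_induct)
  case empty
  then show ?case
    by (simp add: red_zero)
next
  case (insert a A)
  then have "\<nu> (sum f A) \<ge> 0"
    by (intro val_sum_ge) auto
  with insert show ?case
    by (simp add: red_add)
qed

lemma red_power: "\<nu> x \<ge> 0 \<Longrightarrow> red (x ^ n) = red x ^ n"
  by (induction n) (simp_all add: red_one red_mult val_power_nonneg)

lemma red_kron_pow:
  assumes "\<And>r c. \<nu> (M r c) \<ge> 0"
  shows "red (kron_pow M rs cs) = kron_pow (\<lambda>r c. red (M r c)) rs cs"
proof (induction rs arbitrary: cs)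
  case Nil
  then show ?case
    by (cases cs) (simp_all add: red_one red_zero)
next
  case (Cons r rs)
  then show ?case
    by (cases cs) (simp_all add: red_zero red_mult assms val_kron_pow_nonneg)
qed

lemma vec_val_mat_apply_le:
  assumes "finite C" and A_int: "\<And>r c. r \<in> R \<Longrightarrow> c \<in> C \<Longrightarrow> \<nu> (A r c) \<ge> 0"
    and "kernel_trivial R C (\<lambda>r c. red (A r c))"
  shows "vec_val \<nu> R (\<lambda>r. \<Sum>c\<in>C. A r c * x c) \<le> vec_val \<nu> C x"
proof -
  consider "\<forall>c\<in>C. x c = 0" | b where "b \<in> C" "x b \<noteq> 0" "\<forall>c\<in>C. \<nu> (x b) \<le> \<nu> (x c)"
  proof (cases "\<forall>c\<in>C. x c = 0")
    case False
    then obtain b where "is_arg_min (\<lambda>c. \<nu> (x c)) (\<lambda>c. c \<in> C) b"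
      using ex_is_arg_min_if_finite[OF \<open>finite C\<close>] by blast
    then have "b \<in> C" and b_min: "\<forall>c\<in>C. \<nu> (x b) \<le> \<nu> (x c)"
      by (auto simp: is_arg_min_linorder)
    moreover have "x b \<noteq> 0"
      using False b_min by (auto simp: val_zero val_eq_infinity_iff)
    ultimately show ?thesis
      using that(2) by blast
  qed (simp add: val_zero)
  then show ?thesis
  proof cases
    case 1
    then show ?thesis
      by (simp add: vec_val_def val_zero flip: top_ereal_def)
  next
    case 2
    define u where "u c = x c / x b" for c
    have u_int: "\<nu> (u c) \<ge> 0" if "c \<in> C" for c
      using 2 that by (simp add: u_def val_divide_nonneg)
    have "red (u b) \<noteq> 0"
      using 2 by (simp add: u_def red_one)
    then obtain r where "r \<in> R" and red_ne_0: "(\<Sum>c\<in>C. red (A r c) * red (u c)) \<noteq> 0"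
      using assms(3)[unfolded kernel_trivial_def, rule_format, of "\<lambda>c. red (u c)" b] \<open>b \<in> C\<close>
      by blast
    define y where "y = (\<Sum>c\<in>C. A r c * x c)"
    have y_div: "y / x b = (\<Sum>c\<in>C. A r c * u c)"
      by (simp add: y_def u_def sum_divide_distrib)
    have terms_int: "\<nu> (A r c * u c) \<ge> 0" if "c \<in> C" for c
      using A_int[OF \<open>r \<in> R\<close> that] u_int[OF that] by (simp add: val_mult)
    then have "\<nu> (y / x b) \<ge> 0"
      unfolding y_div using \<open>finite C\<close> by (intro val_sum_ge)
    moreover have "red (y / x b) \<noteq> 0"
      using red_ne_0 A_int[OF \<open>r \<in> R\<close>] u_int
      by (simp add: y_div red_sum[OF \<open>finite C\<close> terms_int] red_mult del: times_divide_eq_right)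
    ultimately have "\<nu> (y / x b) = 0"
      by (simp add: red_eq_0_iff)
    then have "\<nu> y = \<nu> (x b)"
      using val_mult[of "y / x b" "x b"] \<open>x b \<noteq> 0\<close> by simp
    then have "vec_val \<nu> R (\<lambda>r. \<Sum>c\<in>C. A r c * x c) \<le> \<nu> (x b)"
      using INF_lower[OF \<open>r \<in> R\<close>, of "\<lambda>r. \<nu> (\<Sum>c\<in>C. A r c * x c)"]
      by (simp add: vec_val_def y_def)
    also have "\<nu> (x b) \<le> vec_val \<nu> C x"
      using 2 unfolding vec_val_def by (intro INF_greatest) auto
    finally show ?thesis .
  qed
qed

lemma vec_val_mat_apply_eq:
  assumes "finite C" and "\<And>r c. r \<in> R \<Longrightarrow> c \<in> C \<Longrightarrow> \<nu> (A r c) \<ge> 0"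
    and "kernel_trivial R C (\<lambda>r c. red (A r c))"
  shows "vec_val \<nu> R (\<lambda>r. \<Sum>c\<in>C. A r c * x c) = vec_val \<nu> C x"
  using vec_val_mat_apply_ge[OF assms(1,2)] vec_val_mat_apply_le[OF assms] by (rule antisym[rotated])

end

end

theorem lemma2p3:
  fixes p e q k :: nat
    and \<nu> :: "'K::field \<Rightarrow> ereal"
    and red :: "'K \<Rightarrow> 'F::{finite,field}"
    and T :: "'F \<Rightarrow> 'K"
    and x :: "'F list \<Rightarrow> 'K"
  assumes "prime p" and "e \<ge> 1" and "q = p ^ e"
    and card: "CARD('F) = q"
    and valuation: "is_valuation p \<nu>"
    and reduction: "is_reduction \<nu> red"
    and teichmueller: "is_teichmueller \<nu> q red T"
  shows "vec_val \<nu> (row_idx q k) (kron_apply (M0 T) k x) = vec_val \<nu> (col_idx k) x"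
proof -
  have T_int: "\<nu> (T a) \<ge> 0" and red_T: "red (T a) = a" for a
    using teichmueller by (simp_all add: is_teichmueller_def teich_set_def)
  have M0_int: "\<nu> (M0 T r a) \<ge> 0" for r a
    unfolding M0_def using valuation T_int by (rule val_power_nonneg)
  have "(\<lambda>r a. red (M0 T r a)) = (\<lambda>r a. a ^ r)"
    by (simp add: M0_def red_power[OF valuation reduction T_int] red_T)
  then have red_A: "(\<lambda>rs cs. red (kron_pow (M0 T) rs cs)) = kron_pow (\<lambda>r a. a ^ r)"
    using red_kron_pow[OF valuation reduction, of "M0 T", OF M0_int] by simp
  have "kernel_trivial (row_idx q k) (col_idx k) (kron_pow (\<lambda>r (a::'F). a ^ r))"
    using kernel_trivial_kron_pow[OF kernel_trivial_power_matrix[where 'F = 'F]] card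
    by (simp add: row_idx_def col_idx_def)
  then have "vec_val \<nu> (row_idx q k) (\<lambda>rs. \<Sum>cs\<in>col_idx k. kron_pow (M0 T) rs cs * x cs)
      = vec_val \<nu> (col_idx k) x"
    unfolding red_A[symmetric]
    by (intro vec_val_mat_apply_eq[OF valuation reduction] val_kron_pow_nonneg[OF valuation M0_int])
      (use finite_lists_length_eq[of "UNIV :: 'F set" k] in \<open>simp add: col_idx_def\<close>)
  moreover have "kron_apply (M0 T) k x = (\<lambda>rs. \<Sum>cs\<in>col_idx k. kron_pow (M0 T) rs cs * x cs)"
    by (simp add: kron_apply_def col_idx_def fun_eq_iff)
  ultimately show ?thesis
    by simp
qed

end
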